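(* Let $(I^*_{g^*},g^* )$ be a Stackelberg equilibrium and let $\pi^*_{g^*}=\Pi_{g^*}(I^*_{g^*}(X))$. Then the induced contract $(I^*_{g^*},\pi^*_{g^*})$ is individually rational and Pareto optimal, and moreover $\rho^{Pol}(I^*_{g^*},\pi^*_{g^*})=\rho^{Pol}(0,0)$.
   Context: $(\Omega,\mathcal F,\mathbb P)$ is a non-atomic probability space; $X\ge0$ is bounded with range $[0,M]$ and strictly increasing distribution function $F_X$. A distortion function is a non-decreasing differentiable map $h:[0,1]\to[0,1]$ with $h(0)=0$, $h(1)=1$; $\int Y\,\mathrm dh\circ\mathbb P=\int_0^\infty h(\mathbb P(Y\ge y))\mathrm dy+\int_{-\infty}^0[h(\mathbb P(Y\ge y))-1]\mathrm dy$. Policyholder distortion $T$, $\rho^{Pol}(Z)=\int Z\,\mathrm dT\circ\mathbb P$; pricing distortion $g$, $\Pi_g(I(X))=\int I(X)\,\mathrm dg\circ\mathbb P$. $\mathcal I_L=\{I:[0,M]\to[0,M]: I(0)=0,\ 0\le I(x_1)-I(x_2)\le x_1-x_2\ \forall x_2\le x_1\}$; for a mechanism, $\rho^{Pol}(I,g)=\rho^{Pol}(X-I(X)+\Pi_g(I(X)))$ and $V^{In}(I,g)=\Pi_g(I(X))-\mathbb E[I(X)]$. $(I^*,g^* )$ is a Stackelberg equilibrium if (i) $I^*\in\arg\min_{I\in\mathcal I_L}\rho^{Pol}(I,g^* )$ and (ii) $V^{In}(I^*,g^* )\ge V^{In}(I,g)$ for all $(I,g)$ with $I\in\arg\min_{\bar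 I\in\mathcal I_L}\rho^{Pol}(\bar I,g)$. For a contract $(I,\pi)\in\mathcal I_L\times\mathbb R$: $\rho^{Pol}(I,\pi)=\rho^{Pol}(X-I(X)+\pi)$, $V^{In}(I,\pi)=\pi-\mathbb E[I(X)]$. A contract $(I^*,\pi^* )$ is individually rational if $\rho^{Pol}(I^*,\pi^* )\le\rho^{Pol}(0,0)$ and $V^{In}(I^*,\pi^* )\ge V^{In}(0,0)$; it is Pareto optimal if no $(I,\pi)$ has $\rho^{Pol}(I,\pi)\le\rho^{Pol}(I^*,\pi^* )$ and $V^{In}(I,\pi)\ge V^{In}(I^*,\pi^* )$ with at least one strict inequality. *)

theory Defs
  imports "HOL-Probability.Probability"
begin

definition nonatomic :: "'a measure \<Rightarrow> bool" where
  "nonatomic M \<longleftrightarrow> (\<forall>A\<in>sets M. measure M A > 0 \<longrightarrow>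
      (\<exists>B\<in>sets M. B \<subseteq> A \<and> 0 < measure M B \<and> measure M B < measure M A))"

definition distortion :: "(real \<Rightarrow> real) \<Rightarrow> bool" where
  "distortion h \<longleftrightarrow> h ` {0..1} \<subseteq> {0..1} \<and> mono_on {0..1} h \<and>
      (\<forall>x\<in>{0..1}. h differentiable (at x within {0..1})) \<and> h 0 = 0 \<and> h 1 = 1"

definition choquet :: "'a measure \<Rightarrow> (real \<Rightarrow> real) \<Rightarrow> ('a \<Rightarrow> real) \<Rightarrow> real" where
  "choquet M h Y =
     (LBINT y:{0..}. h (measure M {\<omega>\<in>space M. Y \<omega> \<ge> y}))
   + (LBINT y:{..<0}. h (measure M {\<omega>\<in>space M. Y \<omega> \<ge> y}) - 1)"

definition indemnities :: "real \<Rightarrow> (real \<Rightarrow> real) set" where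
  "indemnities Mx = {I. I ` {0..Mx} \<subseteq> {0..Mx} \<and> I 0 = 0 \<and>
      (\<forall>x1\<in>{0..Mx}. \<forall>x2\<in>{0..Mx}. x2 \<le> x1 \<longrightarrow> 0 \<le> I x1 - I x2 \<and> I x1 - I x2 \<le> x1 - x2)}"

definition premium :: "'a measure \<Rightarrow> ('a \<Rightarrow> real) \<Rightarrow> (real \<Rightarrow> real) \<Rightarrow> (real \<Rightarrow> real) \<Rightarrow> real" where
  "premium M X g I = choquet M g (\<lambda>\<omega>. I (X \<omega>))"

text \<open>Mechanism (I,g): policyholder's risk and insurer's value.\<close>
definition rho_mech :: "'a measure \<Rightarrow> ('a \<Rightarrow> real) \<Rightarrow> (real \<Rightarrow> real) \<Rightarrow> (real \<Rightarrow> real) \<Rightarrow> (real \<Rightarrow> real) \<Rightarrow> real" where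
  "rho_mech M X T I g = choquet M T (\<lambda>\<omega>. X \<omega> - I (X \<omega>) + premium M X g I)"

definition V_mech :: "'a measure \<Rightarrow> ('a \<Rightarrow> real) \<Rightarrow> (real \<Rightarrow> real) \<Rightarrow> (real \<Rightarrow> real) \<Rightarrow> real" where
  "V_mech M X I g = premium M X g I - integral\<^sup>L M (\<lambda>\<omega>. I (X \<omega>))"

definition rho_contr :: "'a measure \<Rightarrow> ('a \<Rightarrow> real) \<Rightarrow> (real \<Rightarrow> real) \<Rightarrow> (real \<Rightarrow> real) \<Rightarrow> real \<Rightarrow> real" where
  "rho_contr M X T I p = choquet M T (\<lambda>\<omega>. X \<omega> - I (X \<omega>) + p)"

definition V_contr :: "'a measure \<Rightarrow> ('a \<Rightarrow> real) \<Rightarrow> (real \<Rightarrow> real) \<Rightarrow> real \<Rightarrow> real" where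
  "V_contr M X I p = p - integral\<^sup>L M (\<lambda>\<omega>. I (X \<omega>))"

definition best_response :: "'a measure \<Rightarrow> ('a \<Rightarrow> real) \<Rightarrow> real \<Rightarrow> (real \<Rightarrow> real) \<Rightarrow> (real \<Rightarrow> real) \<Rightarrow> (real \<Rightarrow> real) \<Rightarrow> bool" where
  "best_response M X Mx T g I \<longleftrightarrow> I \<in> indemnities Mx \<and>
     (\<forall>J\<in>indemnities Mx. rho_mech M X T I g \<le> rho_mech M X T J g)"

definition stackelberg :: "'a measure \<Rightarrow> ('a \<Rightarrow> real) \<Rightarrow> real \<Rightarrow> (real \<Rightarrow> real) \<Rightarrow> (real \<Rightarrow> real) \<Rightarrow> (real \<Rightarrow> real) \<Rightarrow> bool" where
  "stackelberg M X Mx T I g \<longleftrightarrow> distortion g \<and> best_response M X Mx T g I \<and>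
     (\<forall>J h. distortion h \<longrightarrow> best_response M X Mx T h J \<longrightarrow> V_mech M X J h \<le> V_mech M X I g)"

definition indiv_rational :: "'a measure \<Rightarrow> ('a \<Rightarrow> real) \<Rightarrow> (real \<Rightarrow> real) \<Rightarrow> (real \<Rightarrow> real) \<Rightarrow> real \<Rightarrow> bool" where
  "indiv_rational M X T I p \<longleftrightarrow>
     rho_contr M X T I p \<le> rho_contr M X T (\<lambda>_. 0) 0 \<and> V_contr M X I p \<ge> V_contr M X (\<lambda>_. 0) 0"

definition pareto_optimal :: "'a measure \<Rightarrow> ('a \<Rightarrow> real) \<Rightarrow> real \<Rightarrow> (real \<Rightarrow> real) \<Rightarrow> (real \<Rightarrow> real) \<Rightarrow> real \<Rightarrow> bool" where
  "pareto_optimal M X Mx T I p \<longleftrightarrow>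
     \<not> (\<exists>J\<in>indemnities Mx. \<exists>q::real.
          rho_contr M X T J q \<le> rho_contr M X T I p \<and> V_contr M X J q \<ge> V_contr M X I p \<and>
          (rho_contr M X T J q < rho_contr M X T I p \<or> V_contr M X J q > V_contr M X I p))"

end

theory Submission
  imports Defs
begin

(* Choquet integrals with respect to a distortion h are additive on comonotone risks: for a
   nondecreasing continuous f, the Choquet integral of f(X) is the integral over (0,1) of f composed
   with a distorted quantile of X, because that composition is a generalized inverse of the distorted
   survival function y \<mapsto> h(P(f(X) \<ge> y)) (layer cake / Tonelli). Since X - I(X) and I(X) are both
   such transforms of X, the policyholder's risk under a contract (J, q) is rho(X) - Pi_T(J) + q.
   Pricing with g = T therefore makes every indemnity a best response, so the leader's equilibrium
   value is at least Pi_T(J) - E J for every J; together with the policyholder preferring I to no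
   insurance this forces Pi_g(I) = Pi_T(I). So the policyholder is exactly indifferent to no
   insurance, and a contract better for one party and no worse for the other would give the
   insurer more than its equilibrium value. *)

lemma emeasure_lborel_between_intervals:
  fixes a b :: real
  assumes "{a<..<b} \<subseteq> S" "S \<subseteq> {a..b}" "S \<in> sets lborel"
  shows "emeasure lborel S = ennreal (b - a)"
proof (rule antisym)
  show "emeasure lborel S \<le> ennreal (b - a)"
    using emeasure_mono[OF assms(2), of lborel] by (cases "a \<le> b") auto
  show "ennreal (b - a) \<le> emeasure lborel S"
    using emeasure_mono[OF assms(1,3)] by (cases "a \<le> b") (auto simp: ennreal_neg)
qed

lemma nn_integral_lborel_slices_eq:
  assumes "E \<in> sets (lborel \<Otimes>\<^sub>M lborel)"
    and "\<And>y. emeasure lborel (Pair y -` E) = a y"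
    and "\<And>t. emeasure lborel ((\<lambda>y. (y, t)) -` E) = b t"
  shows "(\<integral>\<^sup>+ y. a y \<partial>lborel) = (\<integral>\<^sup>+ t. b t \<partial>lborel)"
  using lborel.emeasure_pair_measure_alt[OF assms(1)] lborel_pair.emeasure_pair_measure_alt2[OF assms(1)]
  by (simp add: assms(2,3))

(* r is a generalized inverse of the nonincreasing function G on (0,1). Both halves of the
   layer-cake identity are Tonelli applied to the region between the graph of G and level 0 resp. 1. *)
context
  fixes G r :: "real \<Rightarrow> real"
  assumes G_borel[measurable]: "G \<in> borel_measurable borel"
    and G_bounds: "\<And>y. 0 \<le> G y \<and> G y \<le> 1"
    and G_gt_if_lt_r: "\<And>t y. 0 < t \<Longrightarrow> t < 1 \<Longrightarrow> y < r t \<Longrightarrow> t < G y"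
    and le_r_if_G_gt: "\<And>t y. 0 < t \<Longrightarrow> t < 1 \<Longrightarrow> t < G y \<Longrightarrow> y \<le> r t"
begin

lemma nn_integral_nonneg_half_eq_positive_part:
  "(\<integral>\<^sup>+ y. ennreal (indicator {0..} y * G y) \<partial>lborel)
     = (\<integral>\<^sup>+ t. ennreal (indicator {0<..<1} t * r t) \<partial>lborel)"
proof (rule nn_integral_lborel_slices_eq)
  define E where "E = {p :: real \<times> real. 0 \<le> fst p \<and> 0 < snd p \<and> snd p < 1 \<and> snd p < G (fst p)}"
  have "Measurable.pred (borel \<Otimes>\<^sub>M borel)
      (\<lambda>p :: real \<times> real. 0 \<le> fst p \<and> 0 < snd p \<and> snd p < 1 \<and> snd p < G (fst p))"
    by measurable
  then show E: "E \<in> sets (lborel \<Otimes>\<^sub>M lborel)"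
    by (simp add: Measurable.pred_def space_pair_measure E_def)
  show "emeasure lborel (Pair y -` E) = ennreal (indicator {0..} y * G y)" for y
  proof -
    have "{0<..<indicator {0..} y * G y} \<subseteq> Pair y -` E"
      "Pair y -` E \<subseteq> {0..indicator {0..} y * G y}"
      using G_bounds[of y] by (auto simp: E_def split: split_indicator)
    from emeasure_lborel_between_intervals[OF this sets_Pair1[OF E]] show ?thesis by simp
  qed
  show "emeasure lborel ((\<lambda>y. (y, t)) -` E) = ennreal (indicator {0<..<1} t * r t)" for t
  proof -
    have "{0<..<indicator {0<..<1} t * r t} \<subseteq> (\<lambda>y. (y, t)) -` E"
      "(\<lambda>y. (y, t)) -` E \<subseteq> {0..indicator {0<..<1} t * r t}"
      using G_gt_if_lt_r[of t] le_r_if_G_gt[of t] by (auto simp: E_def split: split_indicator)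
    from emeasure_lborel_between_intervals[OF this sets_Pair2[OF E]] show ?thesis by simp
  qed
qed

lemma nn_integral_neg_half_eq_negative_part:
  "(\<integral>\<^sup>+ y. ennreal (indicator {..<0} y * (1 - G y)) \<partial>lborel)
     = (\<integral>\<^sup>+ t. ennreal (- (indicator {0<..<1} t * r t)) \<partial>lborel)"
proof (rule nn_integral_lborel_slices_eq)
  define E where "E = {p :: real \<times> real. fst p < 0 \<and> 0 < snd p \<and> snd p < 1 \<and> G (fst p) \<le> snd p}"
  have "Measurable.pred (borel \<Otimes>\<^sub>M borel)
      (\<lambda>p :: real \<times> real. fst p < 0 \<and> 0 < snd p \<and> snd p < 1 \<and> G (fst p) \<le> snd p)"
    by measurable
  then show E: "E \<in> sets (lborel \<Otimes>\<^sub>M lborel)"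
    by (simp add: Measurable.pred_def space_pair_measure E_def)
  show "emeasure lborel (Pair y -` E) = ennreal (indicator {..<0} y * (1 - G y))" for y
  proof -
    have "{indicator {..<0} y * G y<..<indicator {..<0} y} \<subseteq> Pair y -` E"
      "Pair y -` E \<subseteq> {indicator {..<0} y * G y..indicator {..<0} y}"
      using G_bounds[of y] by (auto simp: E_def split: split_indicator)
    from emeasure_lborel_between_intervals[OF this sets_Pair1[OF E]] show ?thesis
      by (simp add: right_diff_distrib)
  qed
  show "emeasure lborel ((\<lambda>y. (y, t)) -` E) = ennreal (- (indicator {0<..<1} t * r t))" for t
  proof -
    have "{indicator {0<..<1} t * r t<..<0} \<subseteq> (\<lambda>y. (y, t)) -` E"
      "(\<lambda>y. (y, t)) -` E \<subseteq> {indicator {0<..<1} t * r t..0}"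
      using G_gt_if_lt_r[of t] le_r_if_G_gt[of t]
      by (auto simp: E_def not_less[symmetric] split: split_indicator)
    from emeasure_lborel_between_intervals[OF this sets_Pair2[OF E]] show ?thesis by simp
  qed
qed

lemma layer_cake_eq_integral_inverse:
  assumes "set_integrable lborel {0<..<1} r"
  shows "(LBINT y:{0..}. G y) + (LBINT y:{..<0}. G y - 1) = (LBINT t:{0<..<1}. r t)"
proof -
  have "(LBINT y:{0..}. G y) = enn2real (\<integral>\<^sup>+ y. ennreal (indicator {0..} y * G y) \<partial>lborel)"
    unfolding set_lebesgue_integral_def real_scaleR_def using G_bounds by (intro integral_eq_nn_integral) auto
  moreover have "(LBINT y:{..<0}. G y - 1)
      = - enn2real (\<integral>\<^sup>+ y. ennreal (indicator {..<0} y * (1 - G y)) \<partial>lborel)"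
  proof -
    have "(LBINT y:{..<0}. G y - 1) = - (LBINT y:{..<0}. 1 - G y)"
      unfolding set_lebesgue_integral_def by (simp flip: integral_minus add: algebra_simps)
    also have "(LBINT y:{..<0}. 1 - G y)
        = enn2real (\<integral>\<^sup>+ y. ennreal (indicator {..<0} y * (1 - G y)) \<partial>lborel)"
      unfolding set_lebesgue_integral_def real_scaleR_def using G_bounds by (intro integral_eq_nn_integral) auto
    finally show ?thesis .
  qed
  moreover have "(LBINT t:{0<..<1}. r t)
      = enn2real (\<integral>\<^sup>+ t. ennreal (indicator {0<..<1} t * r t) \<partial>lborel)
      - enn2real (\<integral>\<^sup>+ t. ennreal (- (indicator {0<..<1} t * r t)) \<partial>lborel)"
    using assms unfolding set_integrable_def set_lebesgue_integral_def real_scaleR_def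
    by (rule real_lebesgue_integral_def)
  ultimately show ?thesis
    using nn_integral_nonneg_half_eq_positive_part nn_integral_neg_half_eq_negative_part by simp
qed

end

lemma borel_measurable_antimono:
  fixes f :: "real \<Rightarrow> real"
  assumes "antimono f"
  shows "f \<in> borel_measurable borel"
proof -
  have "(\<lambda>x. - f x) \<in> borel_measurable borel"
    using assms by (intro borel_measurable_mono) (auto simp: mono_def antimono_def)
  then have "(\<lambda>x. - (- f x)) \<in> borel_measurable borel" by measurable
  then show ?thesis by simp
qed

lemma borel_measurable_mono_on_comp:
  fixes f :: "real \<Rightarrow> real"
  assumes "mono_on S f" and "X \<in> borel_measurable M" and "\<And>\<omega>. \<omega> \<in> space M \<Longrightarrow> X \<omega> \<in> S"
  shows "(\<lambda>\<omega>. f (X \<omega>)) \<in> borel_measurable M"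
  using measurable_restrict_space2[OF _ assms(2)] borel_measurable_mono_on_fnc[OF assms(1)] assms(3)
  by (auto intro: measurable_compose)

lemma nonneg_upper_bound:
  assumes "prob_space M" and "\<And>\<omega>. \<omega> \<in> space M \<Longrightarrow> 0 \<le> X \<omega> \<and> X \<omega> \<le> Mx"
  shows "0 \<le> (Mx::real)"
  using assms prob_space.not_empty[OF assms(1)] by fastforce

lemma indemnities_increment_bounds:
  assumes "J \<in> indemnities Mx" and "x \<in> {0..Mx}" "y \<in> {0..Mx}" "x \<le> y"
  shows "0 \<le> J y - J x \<and> J y - J x \<le> y - x"
  using assms unfolding indemnities_def by blast

lemma indemnities_mono_on:
  assumes "J \<in> indemnities Mx"
  shows "mono_on {0..Mx} J"
  using indemnities_increment_bounds[OF assms] by (intro mono_onI) force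

lemma indemnities_retention_mono_on:
  assumes "J \<in> indemnities Mx"
  shows "mono_on {0..Mx} (\<lambda>x. x - J x)"
  using indemnities_increment_bounds[OF assms] by (intro mono_onI) force

lemma indemnities_continuous_on:
  assumes "J \<in> indemnities Mx"
  shows "continuous_on {0..Mx} J"
proof (rule lipschitz_on_continuous_on)
  show "1-lipschitz_on {0..Mx} J"
  proof (rule lipschitz_onI)
    fix x y assume "x \<in> {0..Mx}" "y \<in> {0..Mx}"
    then show "dist (J x) (J y) \<le> 1 * dist x y"
      using indemnities_increment_bounds[OF assms, of x y] indemnities_increment_bounds[OF assms, of y x]
      by (cases "x \<le> y") (auto simp: dist_real_def abs_if)
  qed simp
qed

lemma zero_in_indemnities:
  assumes "0 \<le> Mx"
  shows "(\<lambda>_. 0) \<in> indemnities Mx"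
  using assms by (auto simp: indemnities_def)

(* A generalized inverse of x \<mapsto> h (P(X \<ge> x)); the inserted 0 is the value for t \<ge> 1,
   where the set is empty. *)
definition distorted_quantile ::
    "'a measure \<Rightarrow> ('a \<Rightarrow> real) \<Rightarrow> real \<Rightarrow> (real \<Rightarrow> real) \<Rightarrow> real \<Rightarrow> real" where
  "distorted_quantile M X Mx h t =
     Sup (insert 0 {x\<in>{0..Mx}. t < h (measure M {\<omega>\<in>space M. x \<le> X \<omega>})})"

context
  fixes M :: "'a measure" and X :: "'a \<Rightarrow> real" and Mx :: real and h :: "real \<Rightarrow> real"
  assumes prob: "prob_space M" and X_borel: "X \<in> borel_measurable M"
    and X_bounds: "\<And>\<omega>. \<omega> \<in> space M \<Longrightarrow> 0 \<le> X \<omega> \<and> X \<omega> \<le> Mx"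
    and h_bounds: "h ` {0..1} \<subseteq> {0..1}" and h_mono: "mono_on {0..1} h"
    and h_0: "h 0 = 0" and h_1: "h 1 = 1"
begin

lemma distorted_measure_bounds: "0 \<le> h (measure M A) \<and> h (measure M A) \<le> 1"
  using h_bounds prob_space.prob_le_1[OF prob, of A] by (auto simp: image_subset_iff)

lemma distorted_measure_mono:
  assumes "A \<subseteq> B" and "B \<in> sets M"
  shows "h (measure M A) \<le> h (measure M B)"
  using prob_space.prob_le_1[OF prob, of B]
    finite_measure.finite_measure_mono[OF prob_space.axioms(1)[OF prob] assms]
  by (intro mono_onD[OF h_mono]) auto

lemma distorted_quantile_bounds:
  "0 \<le> distorted_quantile M X Mx h t \<and> distorted_quantile M X Mx h t \<le> Mx"
  unfolding distorted_quantile_def using nonneg_upper_bound[OF prob X_bounds]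
  by (intro conjI cSup_upper cSup_least bdd_aboveI[where M=Mx]) auto

lemma distorted_quantile_antimono: "antimono (distorted_quantile M X Mx h)"
  unfolding distorted_quantile_def antimono_def using nonneg_upper_bound[OF prob X_bounds]
  by (auto intro!: cSup_subset_mono bdd_aboveI[where M=Mx])

lemma distorted_survival_gt_if_lt_quantile:
  fixes f :: "real \<Rightarrow> real"
  assumes f_mono: "mono_on {0..Mx} f" and f_cont: "continuous_on {0..Mx} f"
    and "t < 1" and y_lt: "y < f (distorted_quantile M X Mx h t)"
  shows "t < h (measure M {\<omega>\<in>space M. y \<le> f (X \<omega>)})"
proof -
  define A where "A = {x\<in>{0..Mx}. t < h (measure M {\<omega>\<in>space M. x \<le> X \<omega>})}"
  define s where "s = distorted_quantile M X Mx h t"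
  have "{\<omega>\<in>space M. 0 \<le> X \<omega>} = space M"
    using X_bounds by auto
  then have "0 \<in> A"
    using \<open>t < 1\<close> h_1 nonneg_upper_bound[OF prob X_bounds] prob_space.prob_space[OF prob]
    by (simp add: A_def)
  then have s_Sup: "s = Sup A"
    by (simp add: s_def distorted_quantile_def A_def insert_absorb)
  have bdd: "bdd_above A"
    by (rule bdd_aboveI[where M=Mx]) (simp add: A_def)
  have s_bounds: "s \<in> {0..Mx}"
    using distorted_quantile_bounds by (simp add: s_def)
  obtain \<delta> where "\<delta> > 0"
    and \<delta>: "\<And>x. x \<in> {0..Mx} \<Longrightarrow> dist x s < \<delta> \<Longrightarrow> dist (f x) (f s) < f s - y"
    using f_cont s_bounds y_lt unfolding continuous_on_iff s_def by (metis diff_gt_0_iff_gt)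
  obtain x where x: "x \<in> A" "s - \<delta> < x"
    using less_cSupE[of "s - \<delta>" A] \<open>0 \<in> A\<close> \<open>\<delta> > 0\<close> s_Sup by auto
  have "x \<le> s"
    using cSup_upper[OF x(1) bdd] s_Sup by simp
  then have "y < f x"
    using \<delta>[of x] x by (auto simp: A_def dist_real_def)
  have "{\<omega>\<in>space M. x \<le> X \<omega>} \<subseteq> {\<omega>\<in>space M. y \<le> f (X \<omega>)}"
  proof safe
    fix \<omega> assume "\<omega> \<in> space M" "x \<le> X \<omega>"
    then have "f x \<le> f (X \<omega>)"
      using x(1) X_bounds by (intro mono_onD[OF f_mono]) (auto simp: A_def)
    then show "y \<le> f (X \<omega>)"
      using \<open>y < f x\<close> by simp
  qed
  moreover have "{\<omega>\<in>space M. y \<le> f (X \<omega>)} \<in> sets M"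
  proof -
    have [measurable]: "(\<lambda>\<omega>. f (X \<omega>)) \<in> borel_measurable M"
      using borel_measurable_mono_on_comp[OF f_mono X_borel] X_bounds by auto
    show ?thesis by measurable
  qed
  ultimately have
    "h (measure M {\<omega>\<in>space M. x \<le> X \<omega>}) \<le> h (measure M {\<omega>\<in>space M. y \<le> f (X \<omega>)})"
    by (rule distorted_measure_mono)
  then show ?thesis
    using x(1) by (simp add: A_def)
qed

lemma le_quantile_if_distorted_survival_gt:
  fixes f :: "real \<Rightarrow> real"
  assumes f_mono: "mono_on {0..Mx} f" and f_cont: "continuous_on {0..Mx} f"
    and "0 \<le> t" and gt: "t < h (measure M {\<omega>\<in>space M. y \<le> f (X \<omega>)})"
  shows "y \<le> f (distorted_quantile M X Mx h t)"
proof -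
  define B where "B = {x\<in>{0..Mx}. y \<le> f x}"
  define m where "m = Inf B"
  have "{\<omega>\<in>space M. y \<le> f (X \<omega>)} \<noteq> {}"
  proof
    assume "{\<omega>\<in>space M. y \<le> f (X \<omega>)} = {}"
    then show False
      using gt \<open>0 \<le> t\<close> h_0 by (simp del: Collect_empty_eq)
  qed
  then have "B \<noteq> {}"
    using X_bounds by (auto simp: B_def)
  moreover have bdd: "bdd_below B"
    by (rule bdd_belowI[where m=0]) (simp add: B_def)
  moreover have "closed B"
    using continuous_closed_preimage[OF f_cont closed_atLeastAtMost closed_atLeast[of y]]
    by (simp add: B_def vimage_def Int_def)
  ultimately have "m \<in> B"
    unfolding m_def by (rule closed_contains_Inf)
  have "{\<omega>\<in>space M. y \<le> f (X \<omega>)} = {\<omega>\<in>space M. m \<le> X \<omega>}"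
  proof safe
    fix \<omega> assume "\<omega> \<in> space M" "y \<le> f (X \<omega>)"
    then show "m \<le> X \<omega>"
      using X_bounds cInf_lower[OF _ bdd] by (simp add: m_def B_def)
  next
    fix \<omega> assume "\<omega> \<in> space M" "m \<le> X \<omega>"
    then show "y \<le> f (X \<omega>)"
      using \<open>m \<in> B\<close> X_bounds mono_onD[OF f_mono, of m "X \<omega>"] by (auto simp: B_def)
  qed
  then have "m \<le> distorted_quantile M X Mx h t"
    unfolding distorted_quantile_def using gt \<open>m \<in> B\<close>
    by (intro cSup_upper bdd_aboveI[where M=Mx]) (auto simp: B_def)
  then have "f m \<le> f (distorted_quantile M X Mx h t)"
    using \<open>m \<in> B\<close> distorted_quantile_bounds by (intro mono_onD[OF f_mono]) (auto simp: B_def)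
  then show ?thesis
    using \<open>m \<in> B\<close> by (simp add: B_def)
qed

lemma borel_measurable_comp_distorted_quantile:
  fixes f :: "real \<Rightarrow> real"
  assumes "mono_on {0..Mx} f"
  shows "(\<lambda>t. f (distorted_quantile M X Mx h t)) \<in> borel_measurable borel"
proof (rule borel_measurable_antimono)
  show "antimono (\<lambda>t. f (distorted_quantile M X Mx h t))"
    using distorted_quantile_antimono distorted_quantile_bounds
    by (auto simp: antimono_def intro!: mono_onD[OF assms])
qed

lemma set_integrable_comp_distorted_quantile:
  fixes f :: "real \<Rightarrow> real"
  assumes "mono_on {0..Mx} f"
  shows "set_integrable lborel {0<..<1} (\<lambda>t. f (distorted_quantile M X Mx h t))"
  unfolding set_integrable_def
proof (rule integrableI_bounded_set_indicator[where B="\<bar>f 0\<bar> + \<bar>f Mx\<bar>"])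
  show "AE t in lborel. t \<in> {0<..<1} \<longrightarrow>
      norm (f (distorted_quantile M X Mx h t)) \<le> \<bar>f 0\<bar> + \<bar>f Mx\<bar>"
  proof (intro AE_I2 impI)
    fix t
    have "f 0 \<le> f (distorted_quantile M X Mx h t) \<and> f (distorted_quantile M X Mx h t) \<le> f Mx"
      using distorted_quantile_bounds nonneg_upper_bound[OF prob X_bounds]
      by (auto intro!: mono_onD[OF assms])
    then show "norm (f (distorted_quantile M X Mx h t)) \<le> \<bar>f 0\<bar> + \<bar>f Mx\<bar>"
      by (auto simp: abs_if)
  qed
qed (use borel_measurable_comp_distorted_quantile[OF assms] in auto)

lemma choquet_comp_eq_integral_distorted_quantile:
  fixes f :: "real \<Rightarrow> real"
  assumes f_mono: "mono_on {0..Mx} f" and f_cont: "continuous_on {0..Mx} f"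
  shows "choquet M h (\<lambda>\<omega>. f (X \<omega>))
    = (LBINT t:{0<..<1}. f (distorted_quantile M X Mx h t))"
proof -
  define G where "G y = h (measure M {\<omega>\<in>space M. y \<le> f (X \<omega>)})" for y
  have [measurable]: "(\<lambda>\<omega>. f (X \<omega>)) \<in> borel_measurable M"
    using borel_measurable_mono_on_comp[OF f_mono X_borel] X_bounds by auto
  have "antimono G"
    unfolding G_def antimono_def by (auto intro!: distorted_measure_mono)
  then have "(LBINT y:{0..}. G y) + (LBINT y:{..<0}. G y - 1)
      = (LBINT t:{0<..<1}. f (distorted_quantile M X Mx h t))"
  proof (rule layer_cake_eq_integral_inverse[OF borel_measurable_antimono])
    show "0 \<le> G y \<and> G y \<le> 1" for y
      unfolding G_def by (rule distorted_measure_bounds)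
    show "t < G y" if "0 < t" "t < 1" "y < f (distorted_quantile M X Mx h t)" for t y
      unfolding G_def using that by (intro distorted_survival_gt_if_lt_quantile[OF f_mono f_cont])
    show "y \<le> f (distorted_quantile M X Mx h t)" if "0 < t" "t < 1" "t < G y" for t y
      using that unfolding G_def by (intro le_quantile_if_distorted_survival_gt[OF f_mono f_cont]) auto
  qed (rule set_integrable_comp_distorted_quantile[OF f_mono])
  then show ?thesis
    by (simp add: choquet_def G_def)
qed

lemma choquet_const: "choquet M h (\<lambda>\<omega>. c) = c"
  using choquet_comp_eq_integral_distorted_quantile[of "\<lambda>_. c"]
  by (simp add: mono_on_def set_integral_const)

lemma choquet_comonotone_add:
  fixes f g :: "real \<Rightarrow> real"
  assumes f: "mono_on {0..Mx} f" "continuous_on {0..Mx} f"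
    and g: "mono_on {0..Mx} g" "continuous_on {0..Mx} g"
  shows "choquet M h (\<lambda>\<omega>. f (X \<omega>) + g (X \<omega>))
    = choquet M h (\<lambda>\<omega>. f (X \<omega>)) + choquet M h (\<lambda>\<omega>. g (X \<omega>))"
proof -
  have "mono_on {0..Mx} (\<lambda>x. f x + g x)"
    using f(1) g(1) by (auto simp: mono_on_def add_mono)
  moreover have "continuous_on {0..Mx} (\<lambda>x. f x + g x)"
    using f(2) g(2) by (rule continuous_on_add)
  ultimately have "choquet M h (\<lambda>\<omega>. f (X \<omega>) + g (X \<omega>))
      = (LBINT t:{0<..<1}. f (distorted_quantile M X Mx h t) + g (distorted_quantile M X Mx h t))"
    by (rule choquet_comp_eq_integral_distorted_quantile[of "\<lambda>x. f x + g x", simplified])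
  also have "\<dots> = (LBINT t:{0<..<1}. f (distorted_quantile M X Mx h t))
      + (LBINT t:{0<..<1}. g (distorted_quantile M X Mx h t))"
    by (rule set_integral_add(2)[OF set_integrable_comp_distorted_quantile[OF f(1)]
          set_integrable_comp_distorted_quantile[OF g(1)]])
  finally show ?thesis
    by (simp only: choquet_comp_eq_integral_distorted_quantile[OF f]
        choquet_comp_eq_integral_distorted_quantile[OF g])
qed

lemma choquet_retention_add_const:
  assumes "J \<in> indemnities Mx"
  shows "choquet M h (\<lambda>\<omega>. X \<omega> - J (X \<omega>) + c)
    = choquet M h X - choquet M h (\<lambda>\<omega>. J (X \<omega>)) + c"
proof -
  note J = indemnities_mono_on[OF assms] indemnities_continuous_on[OF assms]
  have R: "mono_on {0..Mx} (\<lambda>x. x - J x)" "continuous_on {0..Mx} (\<lambda>x. x - J x)"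
    using indemnities_retention_mono_on[OF assms]
    by (auto intro!: continuous_on_diff continuous_on_id J(2))
  have C: "mono_on {0..Mx} (\<lambda>_. c)" "continuous_on {0..Mx} (\<lambda>_. c)"
    by (simp_all add: mono_on_def)
  have "choquet M h X = choquet M h (\<lambda>\<omega>. (X \<omega> - J (X \<omega>)) + J (X \<omega>))"
    by simp
  also have "\<dots> = choquet M h (\<lambda>\<omega>. X \<omega> - J (X \<omega>)) + choquet M h (\<lambda>\<omega>. J (X \<omega>))"
    by (rule choquet_comonotone_add[OF R J])
  moreover have "choquet M h (\<lambda>\<omega>. X \<omega> - J (X \<omega>) + c)
      = choquet M h (\<lambda>\<omega>. X \<omega> - J (X \<omega>)) + c"
    using choquet_comonotone_add[OF R C] by (simp only: choquet_const)
  ultimately show ?thesis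
    by simp
qed

end

lemma premium_zero:
  assumes "prob_space M" and "X \<in> borel_measurable M"
    and "\<And>\<omega>. \<omega> \<in> space M \<Longrightarrow> 0 \<le> X \<omega> \<and> X \<omega> \<le> Mx" and "distortion h"
  shows "premium M X h (\<lambda>_. 0) = 0"
  using assms(4) choquet_const[OF assms(1-3), of h 0]
  unfolding distortion_def premium_def by auto

context
  fixes M :: "'a measure" and X :: "'a \<Rightarrow> real" and Mx :: real and T :: "real \<Rightarrow> real"
  assumes prob: "prob_space M" and X_borel: "X \<in> borel_measurable M"
    and X_bounds: "\<And>\<omega>. \<omega> \<in> space M \<Longrightarrow> 0 \<le> X \<omega> \<and> X \<omega> \<le> Mx"
    and T: "distortion T"
begin

lemma rho_contr_eq_choquet_minus_premium:
  assumes "J \<in> indemnities Mx"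
  shows "rho_contr M X T J q = choquet M T X - premium M X T J + q"
  using T choquet_retention_add_const[OF prob X_borel X_bounds _ _ _ _ assms, of T q]
  unfolding rho_contr_def premium_def distortion_def by auto

lemma best_response_if_priced_by_own_distortion:
  assumes "J \<in> indemnities Mx"
  shows "best_response M X Mx T T J"
  using assms rho_contr_eq_choquet_minus_premium
  unfolding best_response_def rho_mech_def rho_contr_def[symmetric] by simp

lemma stackelberg_value_ge_own_pricing:
  assumes "stackelberg M X Mx T I g" and "J \<in> indemnities Mx"
  shows "V_contr M X J (premium M X T J) \<le> V_mech M X I g"
  using assms T best_response_if_priced_by_own_distortion[OF assms(2)]
  unfolding stackelberg_def V_contr_def V_mech_def by blast

lemma stackelberg_premium_eq:
  assumes "stackelberg M X Mx T I g"
  shows "premium M X g I = premium M X T I"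
proof (rule antisym)
  have zero: "(\<lambda>_. 0) \<in> indemnities Mx"
    by (rule zero_in_indemnities[OF nonneg_upper_bound[OF prob X_bounds]])
  have I: "I \<in> indemnities Mx" and g: "distortion g"
    and "rho_mech M X T I g \<le> rho_mech M X T (\<lambda>_. 0) g"
    using assms zero unfolding stackelberg_def best_response_def by auto
  \<comment> \<open>the policyholder prefers I to no insurance\<close>
  then show "premium M X g I \<le> premium M X T I"
    using rho_contr_eq_choquet_minus_premium[OF I] rho_contr_eq_choquet_minus_premium[OF zero]
      premium_zero[OF prob X_borel X_bounds g] premium_zero[OF prob X_borel X_bounds T]
    unfolding rho_mech_def rho_contr_def[symmetric] by simp
  \<comment> \<open>the insurer could have priced with T instead of g\<close>
  show "premium M X T I \<le> premium M X g I"
    using stackelberg_value_ge_own_pricing[OF assms I] unfolding V_contr_def V_mech_def by simp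
qed

lemma pareto_optimal_if_indifferent_and_value_maximal:
  assumes I: "I \<in> indemnities Mx" and p: "p = premium M X T I"
    and value_max: "\<And>J. J \<in> indemnities Mx \<Longrightarrow> V_contr M X J (premium M X T J) \<le> V_contr M X I p"
  shows "pareto_optimal M X Mx T I p"
  unfolding pareto_optimal_def
proof clarify
  fix J q assume J: "J \<in> indemnities Mx"
    and rho_le: "rho_contr M X T J q \<le> rho_contr M X T I p"
    and V_ge: "V_contr M X I p \<le> V_contr M X J q"
    and strict: "rho_contr M X T J q < rho_contr M X T I p \<or> V_contr M X I p < V_contr M X J q"
  have "q \<le> premium M X T J" and "q < premium M X T J \<or> V_contr M X I p < V_contr M X J q"
    using rho_le strict p
      rho_contr_eq_choquet_minus_premium[OF J] rho_contr_eq_choquet_minus_premium[OF I]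
    by auto
  then show False
    using V_ge value_max[OF J] unfolding V_contr_def by linarith
qed

end

theorem proposition2:
  fixes M :: "'a measure" and X :: "'a \<Rightarrow> real" and Mx :: real
    and T g :: "real \<Rightarrow> real" and I :: "real \<Rightarrow> real"
  assumes "prob_space M" and "nonatomic M"
    and "0 < Mx" and "X \<in> borel_measurable M"
    and "\<forall>\<omega>\<in>space M. 0 \<le> X \<omega> \<and> X \<omega> \<le> Mx"
    and "strict_mono_on {0..Mx} (\<lambda>x. measure M {\<omega>\<in>space M. X \<omega> \<le> x})"
    and "distortion T"
    and "stackelberg M X Mx T I g"
  shows "indiv_rational M X T I (premium M X g I)
    \<and> pareto_optimal M X Mx T I (premium M X g I)
    \<and> rho_contr M X T I (premium M X g I) = rho_contr M X T (\<lambda>_. 0) 0"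
proof -
  note setting = assms(1,4) assms(5)[rule_format] assms(7)
  define p where "p = premium M X g I"
  have I: "I \<in> indemnities Mx"
    using assms(8) by (simp add: stackelberg_def best_response_def)
  have zero: "(\<lambda>_. 0) \<in> indemnities Mx"
    using assms(3) by (simp add: zero_in_indemnities)
  have p: "p = premium M X T I"
    using stackelberg_premium_eq[OF setting assms(8)] by (simp add: p_def)
  have max: "V_contr M X J (premium M X T J) \<le> V_contr M X I p" if "J \<in> indemnities Mx" for J
    using stackelberg_value_ge_own_pricing[OF setting assms(8) that]
    by (simp add: V_contr_def V_mech_def p_def)
  have indifferent: "rho_contr M X T I p = rho_contr M X T (\<lambda>_. 0) 0"
    using rho_contr_eq_choquet_minus_premium[OF setting I]
      rho_contr_eq_choquet_minus_premium[OF setting zero] premium_zero[OF setting] p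
    by simp
  have "indiv_rational M X T I p"
    using indifferent max[OF zero] premium_zero[OF setting]
    by (simp add: indiv_rational_def V_contr_def)
  moreover have "pareto_optimal M X Mx T I p"
    using pareto_optimal_if_indifferent_and_value_maximal[OF setting I p max] .
  ultimately show ?thesis
    using indifferent by (simp add: p_def)
qed

end
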